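(* Let $X,Y$ be jointly Gaussian centred random variables with common variance $\sigma^2$ and correlation $c$, and let $r>0$. Then as $c\to-1$ (with $\sigma$ fixed), $$\operatorname{E}\big((X^+Y^+)^r\big)\simeq K_r\,\sigma^{-2(1+r)}\big(\det\operatorname{Var}(X,Y)\big)^{(2r+1)/2},\qquad K_r:=\frac1{2\pi}\int_0^\infty\!\!\int_0^\infty x^ry^r\exp\Big(-\frac{(x+y)^2}{2}\Big)dx\,dy<\infty,$$ and $K_1=\frac1{6\pi}$. Moreover, as $c\to-1$, $\operatorname{E}(X^+Y^-)\simeq\frac{\sigma^2}{2}$.
   Context: $z^+=\max(0,z)$, $z^-=-\min(0,z)$. *)

theory Defs
  imports "HOL-Probability.Probability"
begin

definition pos_part :: "real \<Rightarrow> real" where "pos_part z = max 0 z"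
definition neg_part :: "real \<Rightarrow> real" where "neg_part z = - min 0 z"

text \<open>Density of a centred bivariate Gaussian vector (X,Y) with Var X = Var Y = sigma^2
  and correlation c (|c| < 1), i.e. covariance matrix [[s^2, c s^2],[c s^2, s^2]].\<close>
definition binormal_density :: "real \<Rightarrow> real \<Rightarrow> real \<times> real \<Rightarrow> real" where
  "binormal_density \<sigma> c = (\<lambda>(x, y).
     exp (- (x^2 - 2 * c * x * y + y^2) / (2 * \<sigma>^2 * (1 - c^2)))
       / (2 * pi * \<sigma>^2 * sqrt (1 - c^2)))"

definition K_const :: "real \<Rightarrow> real" where
  "K_const r = (1 / (2 * pi)) *
     (LINT p : {0<..} \<times> {0<..} | (lborel :: (real \<times> real) measure).
        (fst p) powr r * (snd p) powr r * exp (- ((fst p + snd p)^2) / 2))"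

end

theory Submission
  imports Defs "HOL-Real_Asymp.Real_Asymp"
begin

text \<open>Both moments become explicit planar integrals after a linear change of variables in the
  bivariate normal density. Scaling both coordinates by \<open>\<sigma> sqrt (1 - c\<^sup>2)\<close> gives
  \<open>E ((X\<^sup>+ Y\<^sup>+) powr r) = \<sigma>^(2r) (1 - c\<^sup>2)^(r + 1/2) / (2 pi) * J c\<close> with
  \<open>J c = \<integral>\<integral> (u\<^sup>+ v\<^sup>+) powr r exp (- (u\<^sup>2 - 2 c u v + v\<^sup>2) / 2)\<close>, and the normalising factor of the
  theorem equals \<open>K_r \<sigma>^(2r) (1 - c\<^sup>2)^(r + 1/2)\<close>, so the ratio is \<open>J c / J (-1)\<close>.
  For \<open>c \<le> 0\<close> the integrand of \<open>J c\<close> is dominated by the product integrand of \<open>J 0\<close>, hence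
  \<open>J c \<longrightarrow> J (-1) = 2 pi K_r > 0\<close> by dominated convergence. For \<open>r = 1\<close> the shear
  \<open>(x, y) = (u, w - u)\<close> reduces \<open>J (-1)\<close> to \<open>\<integral>\<^sub>0\<^sup>\<infinity> w\<^sup>3/6 exp (- w\<^sup>2/2) dw = 1/3\<close>.
  Writing \<open>Y = \<sigma> (c U + sqrt (1 - c\<^sup>2) W)\<close> with \<open>X = \<sigma> U\<close> and \<open>U, W\<close> independent standard normal,
  \<open>E (X\<^sup>+ Y\<^sup>-) = \<sigma>\<^sup>2 / (2 pi) * \<integral>\<integral> u\<^sup>+ (c u + sqrt (1 - c\<^sup>2) w)\<^sup>- exp (- (u\<^sup>2 + w\<^sup>2) / 2)\<close>,
  which tends to \<open>\<sigma>\<^sup>2 / (2 pi) * \<integral> (u\<^sup>+)\<^sup>2 exp (- u\<^sup>2/2) * \<integral> exp (- w\<^sup>2/2) = \<sigma>\<^sup>2 / 2\<close>.\<close>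

lemma borel_measurable_pos_part [measurable]: "pos_part \<in> borel_measurable borel"
  unfolding pos_part_def by measurable

lemma borel_measurable_neg_part [measurable]: "neg_part \<in> borel_measurable borel"
  unfolding neg_part_def by measurable

lemma pos_part_nonneg [simp]: "0 \<le> pos_part x"
  by (simp add: pos_part_def)

lemma neg_part_nonneg [simp]: "0 \<le> neg_part x"
  by (simp add: neg_part_def)

lemma pos_part_mult_pos: "0 < a \<Longrightarrow> pos_part (a * x) = a * pos_part x"
  by (auto simp: pos_part_def max_def mult_le_0_iff zero_le_mult_iff)

lemma neg_part_mult_pos: "0 < a \<Longrightarrow> neg_part (a * x) = a * neg_part x"
  by (auto simp: neg_part_def min_def mult_le_0_iff zero_le_mult_iff)

lemma neg_part_uminus: "neg_part (- x) = pos_part x"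
  by (simp add: pos_part_def neg_part_def max_def min_def)

lemma borel_measurable_fst [measurable]:
  "(fst :: 'a::topological_space \<times> 'b::topological_space \<Rightarrow> 'a) \<in> borel_measurable borel"
  by (intro borel_measurable_continuous_onI continuous_on_fst continuous_on_id)

lemma borel_measurable_snd [measurable]:
  "(snd :: 'a::topological_space \<times> 'b::topological_space \<Rightarrow> 'b) \<in> borel_measurable borel"
  by (intro borel_measurable_continuous_onI continuous_on_snd continuous_on_id)

lemma nn_integral_lborel_pair_shear:
  fixes F :: "real \<times> real \<Rightarrow> ennreal" and a b d :: real
  assumes [measurable]: "F \<in> borel_measurable borel" and a: "a \<noteq> 0" and d: "d \<noteq> 0"
  shows "(\<integral>\<^sup>+p. F p \<partial>lborel)
    = ennreal (\<bar>a\<bar> * \<bar>d\<bar>) * (\<integral>\<^sup>+p. F (a * fst p, b * fst p + d * snd p) \<partial>lborel)"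
proof -
  have F_pair: "F \<in> borel_measurable (lborel \<Otimes>\<^sub>M lborel)"
    by (simp add: lborel_prod)
  have [measurable]: "(\<lambda>x. \<integral>\<^sup>+y. F (x, y) \<partial>lborel) \<in> borel_measurable borel"
    using lborel.borel_measurable_nn_integral_fst[OF F_pair] by (simp add: measurable_lborel1)
  have sheared: "(\<lambda>p. F (a * fst p, b * fst p + d * snd p)) \<in> borel_measurable (lborel \<Otimes>\<^sub>M lborel)"
    unfolding lborel_prod by measurable
  have "(\<integral>\<^sup>+p. F p \<partial>lborel) = (\<integral>\<^sup>+x. \<integral>\<^sup>+y. F (x, y) \<partial>lborel \<partial>lborel)"
    using lborel.nn_integral_fst[OF F_pair] by (simp add: lborel_prod)
  also have "\<dots> = ennreal \<bar>a\<bar> * (\<integral>\<^sup>+u. (\<integral>\<^sup>+y. F (0 + a * u, y) \<partial>lborel) \<partial>lborel)"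
    by (rule nn_integral_real_affine[OF _ a]) measurable
  also have "(\<lambda>u. \<integral>\<^sup>+y. F (0 + a * u, y) \<partial>lborel)
      = (\<lambda>u. ennreal \<bar>d\<bar> * (\<integral>\<^sup>+v. F (a * u, b * u + d * v) \<partial>lborel))"
    by (rule ext, simp, rule nn_integral_real_affine[OF _ d]) measurable
  also have "(\<integral>\<^sup>+u. ennreal \<bar>d\<bar> * (\<integral>\<^sup>+v. F (a * u, b * u + d * v) \<partial>lborel) \<partial>lborel)
      = ennreal \<bar>d\<bar> * (\<integral>\<^sup>+p. F (a * fst p, b * fst p + d * snd p) \<partial>lborel)"
    using lborel.borel_measurable_nn_integral_fst[OF sheared] lborel.nn_integral_fst[OF sheared]
    by (subst nn_integral_cmult) (auto simp: measurable_lborel1 lborel_prod)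
  finally show ?thesis
    by (simp add: ennreal_mult mult.assoc)
qed

lemma nn_integral_lborel_pair_mult:
  fixes f g :: "real \<Rightarrow> ennreal"
  assumes [measurable]: "f \<in> borel_measurable borel" "g \<in> borel_measurable borel"
  shows "(\<integral>\<^sup>+p. f (fst p) * g (snd p) \<partial>lborel) = (\<integral>\<^sup>+x. f x \<partial>lborel) * (\<integral>\<^sup>+y. g y \<partial>lborel)"
proof -
  have "(\<lambda>p. f (fst p) * g (snd p)) \<in> borel_measurable (lborel \<Otimes>\<^sub>M lborel)"
    by measurable
  from lborel.nn_integral_fst[OF this]
  have "(\<integral>\<^sup>+p. f (fst p) * g (snd p) \<partial>lborel) = (\<integral>\<^sup>+x. \<integral>\<^sup>+y. f x * g y \<partial>lborel \<partial>lborel)"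
    by (simp add: lborel_prod)
  also have "\<dots> = (\<integral>\<^sup>+x. f x * (\<integral>\<^sup>+y. g y \<partial>lborel) \<partial>lborel)"
    by (subst nn_integral_cmult) auto
  finally show ?thesis
    by (simp add: nn_integral_multc)
qed

lemma integrable_lborel_pair_mult:
  fixes f g :: "real \<Rightarrow> real"
  assumes f: "integrable lborel f" and g: "integrable lborel g"
  shows "integrable lborel (\<lambda>p::real \<times> real. f (fst p) * g (snd p))"
proof -
  have [measurable]: "f \<in> borel_measurable borel" "g \<in> borel_measurable borel"
    using f g by (auto dest: borel_measurable_integrable)
  have "(\<integral>\<^sup>+p. ennreal (norm (f (fst p) * g (snd p))) \<partial>(lborel :: (real \<times> real) measure))
      = (\<integral>\<^sup>+x. ennreal (norm (f x)) \<partial>lborel) * (\<integral>\<^sup>+y. ennreal (norm (g y)) \<partial>lborel)"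
    using nn_integral_lborel_pair_mult[of "\<lambda>x. ennreal \<bar>f x\<bar>" "\<lambda>y. ennreal \<bar>g y\<bar>"]
    by (simp add: ennreal_mult abs_mult)
  also have "\<dots> < \<infinity>"
    using f g unfolding integrable_iff_bounded by (simp add: ennreal_mult_less_top)
  finally show ?thesis
    unfolding integrable_iff_bounded by (simp add: measurable_lborel1)
qed

lemma integral_lborel_pair_mult:
  fixes f g :: "real \<Rightarrow> real"
  assumes f: "integrable lborel f" and g: "integrable lborel g"
    and "\<And>x. 0 \<le> f x" "\<And>x. 0 \<le> g x"
  shows "(\<integral>p. f (fst p) * g (snd p) \<partial>(lborel :: (real \<times> real) measure))
    = (\<integral>x. f x \<partial>lborel) * (\<integral>y. g y \<partial>lborel)"
proof -
  have [measurable]: "f \<in> borel_measurable borel" "g \<in> borel_measurable borel"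
    using f g by (auto dest: borel_measurable_integrable)
  have "(\<integral>\<^sup>+p. ennreal (f (fst p) * g (snd p)) \<partial>(lborel :: (real \<times> real) measure))
      = (\<integral>\<^sup>+x. ennreal (f x) \<partial>lborel) * (\<integral>\<^sup>+y. ennreal (g y) \<partial>lborel)"
    using assms nn_integral_lborel_pair_mult[of "\<lambda>x. ennreal (f x)" "\<lambda>y. ennreal (g y)"]
    by (simp add: ennreal_mult)
  then show ?thesis
    using assms by (simp add: integral_eq_nn_integral enn2real_mult measurable_lborel1)
qed

lemma integral_dominated_convergence_at_right:
  fixes s :: "real \<Rightarrow> 'a \<Rightarrow> real" and w f :: "'a \<Rightarrow> real"
  assumes "a < b" and "\<And>t. t \<in> {a<..<b} \<Longrightarrow> s t \<in> borel_measurable M"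
    and "integrable M w" and "f \<in> borel_measurable M"
    and lim: "\<And>x. x \<in> space M \<Longrightarrow> ((\<lambda>t. s t x) \<longlongrightarrow> f x) (at_right a)"
    and "\<And>t x. t \<in> {a<..<b} \<Longrightarrow> x \<in> space M \<Longrightarrow> \<bar>s t x\<bar> \<le> w x"
  shows "((\<lambda>t. integral\<^sup>L M (s t)) \<longlongrightarrow> integral\<^sup>L M f) (at_right a)"
proof (rule tendsto_at_right_sequentially[OF \<open>a < b\<close>])
  fix S :: "nat \<Rightarrow> real"
  assume S: "\<And>n. a < S n" "\<And>n. S n < b" "S \<longlonglongrightarrow> a"
  then have "filterlim S (at_right a) sequentially"
    by (auto intro!: tendsto_imp_filterlim_at_right eventuallyI)
  with assms S show "(\<lambda>n. integral\<^sup>L M (s (S n))) \<longlonglongrightarrow> integral\<^sup>L M f"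
    by (intro integral_dominated_convergence[where w = w] AE_I2 filterlim_compose[OF lim]) auto
qed

lemma integral_distributed_pair_shear:
  fixes X Y :: "'a \<Rightarrow> real" and f H :: "real \<times> real \<Rightarrow> real" and G :: "real \<Rightarrow> real \<Rightarrow> real"
  assumes distr: "distributed M lborel (\<lambda>\<omega>. (X \<omega>, Y \<omega>)) (\<lambda>p. ennreal (f p))"
    and [measurable]: "case_prod G \<in> borel_measurable borel" "H \<in> borel_measurable borel"
    and nonneg: "\<And>p. 0 \<le> f p" "\<And>x y. 0 \<le> G x y" "\<And>p. 0 \<le> H p" "0 \<le> C"
    and "a \<noteq> 0" "d \<noteq> 0"
    and shear: "\<And>u v. \<bar>a\<bar> * \<bar>d\<bar> * (f (a * u, b * u + d * v) * G (a * u) (b * u + d * v)) = C * H (u, v)"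
  shows "(\<integral>\<omega>. G (X \<omega>) (Y \<omega>) \<partial>M) = C * (\<integral>p. H p \<partial>lborel)"
proof -
  have [measurable]: "f \<in> borel_measurable borel"
    using distributed_real_measurable[OF _ distr] nonneg by (simp add: measurable_lborel1)
  have shear_map: "(\<lambda>p::real \<times> real. (a * fst p, b * fst p + d * snd p)) \<in> borel_measurable borel"
    by (intro borel_measurable_continuous_onI continuous_intros)
  have "(\<lambda>p. f p * case_prod G p) \<in> borel_measurable borel"
    by measurable
  from measurable_comp[OF shear_map this]
  have [measurable]: "(\<lambda>p. f (a * fst p, b * fst p + d * snd p)
      * G (a * fst p) (b * fst p + d * snd p)) \<in> borel_measurable borel"
    by (simp add: comp_def)
  have "(\<integral>\<omega>. G (X \<omega>) (Y \<omega>) \<partial>M) = (\<integral>p. f p * case_prod G p \<partial>lborel)"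
    using distributed_integral[OF distr, of "case_prod G"] nonneg by (simp add: measurable_lborel1)
  also have "\<dots> = enn2real (\<integral>\<^sup>+p. ennreal (f p * case_prod G p) \<partial>lborel)"
    using nonneg by (intro integral_eq_nn_integral) (auto simp: measurable_lborel1 split: prod.split)
  also have "(\<integral>\<^sup>+p. ennreal (f p * case_prod G p) \<partial>lborel)
      = ennreal (\<bar>a\<bar> * \<bar>d\<bar>) * (\<integral>\<^sup>+p. ennreal (f (a * fst p, b * fst p + d * snd p)
          * G (a * fst p) (b * fst p + d * snd p)) \<partial>lborel)"
    using nn_integral_lborel_pair_shear[of "\<lambda>p. ennreal (f p * case_prod G p)" a d b] \<open>a \<noteq> 0\<close> \<open>d \<noteq> 0\<close>
    by simp
  also have "\<dots> = (\<integral>\<^sup>+p. ennreal (C * H p) \<partial>lborel)"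
    using nonneg by (subst nn_integral_cmult[symmetric])
      (auto simp: ennreal_mult[symmetric] shear[symmetric] intro!: nn_integral_cong)
  also have "\<dots> = ennreal C * (\<integral>\<^sup>+p. ennreal (H p) \<partial>lborel)"
    using nonneg by (simp add: ennreal_mult nn_integral_cmult)
  finally show ?thesis
    using nonneg by (simp add: enn2real_mult integral_eq_nn_integral measurable_lborel1)
qed

lemma integrable_abs_power_gauss: "integrable lborel (\<lambda>u::real. \<bar>u\<bar> ^ k * exp (- (u\<^sup>2) / 2))"
proof -
  have "integrable lborel (\<lambda>u. sqrt (2 * pi) * (std_normal_density u * \<bar>u\<bar> ^ k))"
    by (intro integrable_mult_right integrable_std_normal_moment_abs)
  then show ?thesis
    by (simp add: std_normal_density_def mult.commute)
qed

lemma integral_gauss: "(\<integral>u. exp (- (u\<^sup>2) / 2) \<partial>lborel) = sqrt (2 * pi)"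
proof -
  have "(\<integral>u. exp (- (u\<^sup>2) / 2) \<partial>lborel) = (\<integral>u. sqrt (2 * pi) * std_normal_density u \<partial>lborel)"
    by (simp add: std_normal_density_def)
  then show ?thesis
    by simp
qed

lemma integrable_pos_part_powr_gauss:
  assumes "0 \<le> r"
  shows "integrable lborel (\<lambda>u. pos_part u powr r * exp (- (u\<^sup>2) / 2))"
proof (rule Bochner_Integration.integrable_bound)
  define k where "k = nat \<lceil>r\<rceil>"
  show "integrable lborel (\<lambda>u::real. \<bar>u\<bar> ^ 0 * exp (- (u\<^sup>2) / 2) + \<bar>u\<bar> ^ k * exp (- (u\<^sup>2) / 2))"
    by (intro Bochner_Integration.integrable_add integrable_abs_power_gauss)
  have bound: "pos_part u powr r \<le> \<bar>u\<bar> ^ 0 + \<bar>u\<bar> ^ k" for u :: real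
  proof (cases "u \<le> 1")
    case True
    then have "pos_part u powr r \<le> 1"
      using assms by (cases "u \<le> 0") (auto simp: pos_part_def intro: powr_le1)
    then show ?thesis
      by (simp add: add_increasing2)
  next
    case False
    moreover have "r \<le> real k"
      unfolding k_def by linarith
    ultimately have "pos_part u powr r \<le> u powr real k"
      by (simp add: pos_part_def powr_mono)
    also have "\<dots> = \<bar>u\<bar> ^ k"
      using False by (simp add: powr_realpow)
    finally show ?thesis
      by simp
  qed
  show "AE u in lborel. norm (pos_part u powr r * exp (- (u\<^sup>2) / 2))
      \<le> norm (\<bar>u\<bar> ^ 0 * exp (- (u\<^sup>2) / 2) + \<bar>u\<bar> ^ k * exp (- (u\<^sup>2) / 2))"
    using mult_right_mono[OF bound, of "exp (- (u\<^sup>2) / 2)" for u]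
    by (intro AE_I2) (simp add: distrib_right)
qed (simp add: measurable_lborel1)

lemma integral_pos_part_sq_gauss: "(\<integral>u. (pos_part u)\<^sup>2 * exp (- (u\<^sup>2) / 2) \<partial>lborel) = sqrt (2 * pi) / 2"
proof -
  let ?P = "\<integral>u. (pos_part u)\<^sup>2 * exp (- (u\<^sup>2) / 2) \<partial>lborel"
  let ?N = "\<integral>u. (neg_part u)\<^sup>2 * exp (- (u\<^sup>2) / 2) \<partial>lborel"
  have "?P = ?N"
    using lborel_integral_real_affine[where c = "-1" and t = 0, of "\<lambda>u. (pos_part u)\<^sup>2 * exp (- (u\<^sup>2) / 2)"]
    by (simp flip: neg_part_uminus)
  moreover have "?P + ?N = (\<integral>u. sqrt (2 * pi) * (std_normal_density u * u ^ (2 * 1)) \<partial>lborel)"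
  proof -
    have int_P: "integrable lborel (\<lambda>u::real. (pos_part u)\<^sup>2 * exp (- (u\<^sup>2) / 2))"
      using integrable_pos_part_powr_gauss[of 2] by (simp add: powr_realpow' pos_part_def)
    then have "integrable lborel (\<lambda>u::real. (neg_part u)\<^sup>2 * exp (- (u\<^sup>2) / 2))"
      using lborel_integrable_real_affine_iff[where c = "-1" and t = 0,
          of "\<lambda>u. (pos_part u)\<^sup>2 * exp (- (u\<^sup>2) / 2)"]
      by (simp flip: neg_part_uminus)
    with int_P have "?P + ?N = (\<integral>u. ((pos_part u)\<^sup>2 + (neg_part u)\<^sup>2) * exp (- (u\<^sup>2) / 2) \<partial>lborel)"
      by (simp add: distrib_right)
    also have "(\<lambda>u. ((pos_part u)\<^sup>2 + (neg_part u)\<^sup>2) * exp (- (u\<^sup>2) / 2))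
        = (\<lambda>u. sqrt (2 * pi) * (std_normal_density u * u ^ (2 * 1)))"
      by (auto simp: std_normal_density_def pos_part_def neg_part_def max_def min_def)
    finally show ?thesis .
  qed
  moreover have "(\<integral>u. std_normal_density u * u ^ (2 * 1) \<partial>lborel) = 1"
    using integral_std_normal_moment_even[of 1] by simp
  ultimately show ?thesis
    by simp
qed

lemma nn_integral_pos_part_mult_pos_part_diff:
  "(\<integral>\<^sup>+u. ennreal (pos_part u * pos_part (w - u)) \<partial>lborel) = ennreal (pos_part w ^ 3 / 6)"
proof (cases "0 < w")
  case True
  have "(\<integral>\<^sup>+u. ennreal (pos_part u * pos_part (w - u)) \<partial>lborel)
      = (\<integral>\<^sup>+u. ennreal (u * (w - u)) * indicator {0..w} u \<partial>lborel)"
    by (intro nn_integral_cong) (auto simp: pos_part_def indicator_def)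
  also have "\<dots> = ennreal ((w * w\<^sup>2 / 2 - w ^ 3 / 3) - (w * 0\<^sup>2 / 2 - 0 ^ 3 / 3))"
    by (rule nn_integral_FTC_Icc[where F = "\<lambda>u. w * u\<^sup>2 / 2 - u ^ 3 / 3"])
      (use True in \<open>auto intro!: derivative_eq_intros mult_left_mono simp: power2_eq_square algebra_simps\<close>)
  finally show ?thesis
    using True by (simp add: pos_part_def power2_eq_square power3_eq_cube)
next
  case False
  then have zero: "pos_part u * pos_part (w - u) = 0" for u
    by (auto simp: pos_part_def)
  have "pos_part w = 0"
    using False by (simp add: pos_part_def)
  then show ?thesis
    by (simp add: zero)
qed

lemma nn_integral_pos_part_cube_gauss: "(\<integral>\<^sup>+w. ennreal (pos_part w ^ 3 * exp (- (w\<^sup>2) / 2)) \<partial>lborel) = 2"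
proof -
  have "(\<integral>\<^sup>+w. ennreal (pos_part w ^ 3 * exp (- (w\<^sup>2) / 2)) \<partial>lborel)
      = (\<integral>\<^sup>+w. ennreal (w ^ 3 * exp (- (w\<^sup>2) / 2)) * indicator {0..} w \<partial>lborel)"
    by (intro nn_integral_cong) (auto simp: pos_part_def indicator_def)
  also have "\<dots> = ennreal (0 - (- (0\<^sup>2 + 2) * exp (- (0\<^sup>2) / 2)))"
  proof (rule nn_integral_FTC_atLeast[where F = "\<lambda>w. - (w\<^sup>2 + 2) * exp (- (w\<^sup>2) / 2)"])
    show "((\<lambda>w::real. - (w\<^sup>2 + 2) * exp (- (w\<^sup>2) / 2)) \<longlongrightarrow> 0) at_top"
      by real_asymp
  qed (auto intro!: derivative_eq_intros simp: power2_eq_square power3_eq_cube algebra_simps)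
  finally show ?thesis
    by simp
qed

definition pos_moment_kernel :: "real \<Rightarrow> real \<Rightarrow> real \<times> real \<Rightarrow> real" where
  "pos_moment_kernel r c p = (pos_part (fst p) * pos_part (snd p)) powr r
     * exp (- ((fst p)\<^sup>2 - 2 * c * fst p * snd p + (snd p)\<^sup>2) / 2)"

lemma borel_measurable_pos_moment_kernel [measurable]: "pos_moment_kernel r c \<in> borel_measurable borel"
  unfolding pos_moment_kernel_def by measurable

lemma pos_moment_kernel_nonneg [simp]: "0 \<le> pos_moment_kernel r c p"
  by (simp add: pos_moment_kernel_def)

lemma pos_moment_kernel_uncorrelated:
  "pos_moment_kernel r 0 p
    = (pos_part (fst p) powr r * exp (- (fst p)\<^sup>2 / 2)) * (pos_part (snd p) powr r * exp (- (snd p)\<^sup>2 / 2))"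
  by (simp add: pos_moment_kernel_def powr_mult field_simps flip: exp_add)

lemma pos_moment_kernel_le_uncorrelated:
  assumes "c \<le> 0"
  shows "pos_moment_kernel r c p \<le> pos_moment_kernel r 0 p"
proof (cases "0 < fst p \<and> 0 < snd p")
  case True
  with assms have "c * fst p * snd p \<le> 0"
    by (simp add: mult_nonpos_nonneg)
  then show ?thesis
    unfolding pos_moment_kernel_def by (intro mult_left_mono) auto
next
  case False
  then show ?thesis
    by (auto simp: pos_moment_kernel_def pos_part_def)
qed

lemma integrable_pos_moment_kernel:
  assumes "0 \<le> r" "c \<le> 0"
  shows "integrable lborel (pos_moment_kernel r c)"
proof (rule Bochner_Integration.integrable_bound)
  show "integrable lborel (pos_moment_kernel r 0)"
    unfolding pos_moment_kernel_uncorrelated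
    using integrable_lborel_pair_mult[OF integrable_pos_part_powr_gauss integrable_pos_part_powr_gauss] assms
    by simp
  show "AE p in lborel. norm (pos_moment_kernel r c p) \<le> norm (pos_moment_kernel r 0 p)"
    using pos_moment_kernel_le_uncorrelated[OF assms(2)] by (intro AE_I2) simp
qed (simp add: measurable_lborel1)

lemma indicator_quadrant_mult_K_integrand:
  "indicator ({0<..} \<times> {0<..}) p *\<^sub>R ((fst p) powr r * (snd p) powr r * exp (- ((fst p + snd p)\<^sup>2) / 2))
    = pos_moment_kernel r (-1) p"
proof (cases "0 < fst p \<and> 0 < snd p")
  case True
  moreover have "(fst p)\<^sup>2 - 2 * (-1) * fst p * snd p + (snd p)\<^sup>2 = (fst p + snd p)\<^sup>2"
    by (simp add: power2_eq_square algebra_simps)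
  ultimately show ?thesis
    by (simp add: pos_moment_kernel_def pos_part_def powr_mult indicator_def mem_Times_iff)
next
  case False
  then show ?thesis
    by (auto simp: pos_moment_kernel_def pos_part_def indicator_def mem_Times_iff)
qed

lemma set_integrable_K_integrand:
  "0 \<le> r \<Longrightarrow> set_integrable (lborel :: (real \<times> real) measure) ({0<..} \<times> {0<..})
     (\<lambda>p. (fst p) powr r * (snd p) powr r * exp (- ((fst p + snd p)\<^sup>2) / 2))"
  unfolding set_integrable_def indicator_quadrant_mult_K_integrand
  by (simp add: integrable_pos_moment_kernel)

lemma K_const_eq_integral_pos_moment_kernel:
  "K_const r = (\<integral>p. pos_moment_kernel r (-1) p \<partial>lborel) / (2 * pi)"
  unfolding K_const_def set_lebesgue_integral_def indicator_quadrant_mult_K_integrand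
  by simp

lemma integral_pos_moment_kernel_pos:
  assumes "0 \<le> r"
  shows "0 < (\<integral>p. pos_moment_kernel r (-1) p \<partial>lborel)"
proof -
  let ?B = "{0<..<1} \<times> {0<..<1} :: (real \<times> real) set"
  have "(\<integral>p. pos_moment_kernel r (-1) p \<partial>lborel) \<noteq> 0"
  proof
    assume "(\<integral>p. pos_moment_kernel r (-1) p \<partial>lborel) = 0"
    then have "AE p in lborel. pos_moment_kernel r (-1) p = 0"
      using integral_nonneg_eq_0_iff_AE[OF integrable_pos_moment_kernel] assms by simp
    then have "AE p in lborel. p \<notin> ?B"
      by eventually_elim (auto simp: pos_moment_kernel_def pos_part_def mem_Times_iff)
    then have "emeasure lborel ?B = 0"
      using emeasure_eq_0_AE by fastforce
    moreover have "emeasure lborel ?B = 1"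
      by (simp add: lborel_prod[symmetric] lborel.emeasure_pair_measure_Times)
    ultimately show False
      by simp
  qed
  moreover have "0 \<le> (\<integral>p. pos_moment_kernel r (-1) p \<partial>lborel)"
    by (simp add: integral_nonneg)
  ultimately show ?thesis
    by linarith
qed

lemma tendsto_integral_pos_moment_kernel:
  assumes "0 \<le> r"
  shows "((\<lambda>c. \<integral>p. pos_moment_kernel r c p \<partial>lborel) \<longlongrightarrow> (\<integral>p. pos_moment_kernel r (-1) p \<partial>lborel))
    (at_right (-1))"
proof (rule integral_dominated_convergence_at_right[where b = 0 and w = "pos_moment_kernel r 0"])
  show "integrable lborel (pos_moment_kernel r 0)"
    using integrable_pos_moment_kernel assms by simp
  show "((\<lambda>c. pos_moment_kernel r c p) \<longlongrightarrow> pos_moment_kernel r (-1) p) (at_right (-1))" for p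
    unfolding pos_moment_kernel_def by (intro tendsto_intros) auto
  show "\<bar>pos_moment_kernel r c p\<bar> \<le> pos_moment_kernel r 0 p" if "c \<in> {-1<..<0}" for c p
    using pos_moment_kernel_le_uncorrelated[of c r p] that by simp
qed (simp_all add: measurable_lborel1)

lemma integral_pos_moment_kernel_one: "(\<integral>p. pos_moment_kernel 1 (-1) p \<partial>lborel) = 1 / 3"
proof -
  define F where "F q = ennreal (pos_part (fst q) * pos_part (snd q - fst q) * exp (- (snd q)\<^sup>2 / 2))" for q
  have [measurable]: "F \<in> borel_measurable (lborel \<Otimes>\<^sub>M lborel)"
    unfolding F_def lborel_prod by measurable
  have "(\<integral>\<^sup>+p. ennreal (pos_moment_kernel 1 (-1) p) \<partial>lborel)
      = (\<integral>\<^sup>+q. ennreal (pos_moment_kernel 1 (-1) (1 * fst q, (-1) * fst q + 1 * snd q)) \<partial>lborel)"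
    using nn_integral_lborel_pair_shear[of "\<lambda>p. ennreal (pos_moment_kernel 1 (-1) p)" 1 1 "-1"] by simp
  also have "\<dots> = (\<integral>\<^sup>+q. F q \<partial>(lborel \<Otimes>\<^sub>M lborel))"
    unfolding F_def lborel_prod
    by (intro nn_integral_cong) (simp add: pos_moment_kernel_def power2_eq_square algebra_simps)
  also have "\<dots> = (\<integral>\<^sup>+w. \<integral>\<^sup>+u. ennreal (pos_part u * pos_part (w - u) * exp (- w\<^sup>2 / 2)) \<partial>lborel \<partial>lborel)"
    by (simp add: lborel_pair.nn_integral_snd[symmetric] F_def)
  also have "\<dots> = (\<integral>\<^sup>+w. ennreal (pos_part w ^ 3 * exp (- w\<^sup>2 / 2)) * ennreal (1 / 6) \<partial>lborel)"
  proof -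
    have "(\<integral>\<^sup>+u. ennreal (pos_part u * pos_part (w - u) * exp (- w\<^sup>2 / 2)) \<partial>lborel)
        = (\<integral>\<^sup>+u. ennreal (pos_part u * pos_part (w - u)) \<partial>lborel) * ennreal (exp (- w\<^sup>2 / 2))" for w
      by (simp add: ennreal_mult nn_integral_multc)
    then show ?thesis
      by (simp add: nn_integral_pos_part_mult_pos_part_diff flip: ennreal_mult)
  qed
  also have "\<dots> = 2 * ennreal (1 / 6)"
    using nn_integral_pos_part_cube_gauss by (subst nn_integral_multc) simp_all
  also have "\<dots> = ennreal (1 / 3)"
    by (simp flip: ennreal_numeral ennreal_mult)
  finally show ?thesis
    by (simp add: integral_eq_nn_integral measurable_lborel1)
qed

lemma K_const_one: "K_const 1 = 1 / (6 * pi)"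
  by (simp add: K_const_eq_integral_pos_moment_kernel integral_pos_moment_kernel_one)

lemma binormal_density_nonneg [simp]: "c \<in> {-1<..<1} \<Longrightarrow> 0 \<le> binormal_density \<sigma> c p"
  by (auto simp: binormal_density_def split_beta' abs_square_le_1 abs_le_iff intro!: divide_nonneg_nonneg)

lemma binormal_density_scaled:
  assumes "0 < \<sigma>" "c \<in> {-1<..<1}"
  shows "binormal_density \<sigma> c (\<sigma> * x, \<sigma> * y)
    = exp (- (x\<^sup>2 - 2 * c * x * y + y\<^sup>2) / (2 * (1 - c\<^sup>2))) / (2 * pi * \<sigma>\<^sup>2 * sqrt (1 - c\<^sup>2))"
proof -
  define q where "q = x\<^sup>2 - 2 * c * x * y + y\<^sup>2"
  have "1 - c\<^sup>2 \<noteq> 0"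
    using assms by (auto simp: abs_square_eq_1)
  then have "- (\<sigma>\<^sup>2 * q) / (2 * \<sigma>\<^sup>2 * (1 - c\<^sup>2)) = - q / (2 * (1 - c\<^sup>2))"
    using assms by simp
  moreover have "(\<sigma> * x)\<^sup>2 - 2 * c * (\<sigma> * x) * (\<sigma> * y) + (\<sigma> * y)\<^sup>2 = \<sigma>\<^sup>2 * q"
    by (simp add: q_def power2_eq_square algebra_simps)
  ultimately show ?thesis
    unfolding binormal_density_def prod.case q_def[symmetric] by (simp only:)
qed

lemma binormal_det_powr:
  assumes "0 < \<sigma>" "c \<in> {-1<..<1}"
  shows "\<sigma> powr (- 2 * (1 + r)) * (\<sigma>\<^sup>2 * \<sigma>\<^sup>2 - (c * \<sigma>\<^sup>2) * (c * \<sigma>\<^sup>2)) powr ((2 * r + 1) / 2)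
    = (\<sigma>\<^sup>2 * (1 - c\<^sup>2)) powr r * sqrt (1 - c\<^sup>2)"
proof -
  define t where "t = \<sigma>\<^sup>2"
  have t: "0 < t"
    using assms by (simp add: t_def)
  have c: "0 < 1 - c\<^sup>2"
    using assms by (simp add: abs_square_less_1 abs_less_iff)
  have "\<sigma> powr (- 2 * (1 + r)) = t powr (- (1 + r))"
    using assms by (simp add: t_def powr_powr flip: powr_numeral)
  moreover have "\<sigma>\<^sup>2 * \<sigma>\<^sup>2 - (c * \<sigma>\<^sup>2) * (c * \<sigma>\<^sup>2) = t powr 2 * (1 - c\<^sup>2)"
    using t by (simp add: t_def power2_eq_square algebra_simps)
  ultimately have "\<sigma> powr (- 2 * (1 + r)) * (\<sigma>\<^sup>2 * \<sigma>\<^sup>2 - (c * \<sigma>\<^sup>2) * (c * \<sigma>\<^sup>2)) powr ((2 * r + 1) / 2)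
      = t powr (- (1 + r)) * ((t powr 2) powr ((2 * r + 1) / 2) * (1 - c\<^sup>2) powr ((2 * r + 1) / 2))"
    using c by (simp only: powr_mult powr_ge_zero less_imp_le)
  also have "\<dots> = t powr (- (1 + r)) * t powr (2 * r + 1) * (1 - c\<^sup>2) powr (r + 1 / 2)"
    by (simp add: powr_powr add_divide_distrib)
  also have "\<dots> = t powr r * ((1 - c\<^sup>2) powr r * (1 - c\<^sup>2) powr (1 / 2))"
    by (simp add: algebra_simps flip: powr_add)
  also have "\<dots> = (t * (1 - c\<^sup>2)) powr r * sqrt (1 - c\<^sup>2)"
    using t c by (simp add: powr_mult powr_half_sqrt)
  finally show ?thesis
    unfolding t_def .
qed

lemma binormal_density_mult_pos_part_powr_scaled:
  assumes "0 < \<sigma>" "c \<in> {-1<..<1}"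
  defines "s \<equiv> sqrt (1 - c\<^sup>2)"
  shows "\<bar>\<sigma> * s\<bar> * \<bar>\<sigma> * s\<bar> * (binormal_density \<sigma> c (\<sigma> * s * u, 0 * u + \<sigma> * s * v)
      * (pos_part (\<sigma> * s * u) * pos_part (0 * u + \<sigma> * s * v)) powr r)
    = (\<sigma>\<^sup>2 * (1 - c\<^sup>2)) powr r * s / (2 * pi) * pos_moment_kernel r c (u, v)"
proof -
  define k where "k = 1 - c\<^sup>2"
  define q where "q = u\<^sup>2 - 2 * c * u * v + v\<^sup>2"
  have k: "0 < k"
    using assms by (simp add: k_def abs_square_less_1 abs_less_iff)
  have s: "0 < s" "s\<^sup>2 = k" "sqrt k = s"
    using k by (simp_all add: s_def k_def)
  have "(s * u)\<^sup>2 - 2 * c * (s * u) * (s * v) + (s * v)\<^sup>2 = k * q"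
    by (simp add: q_def power2_eq_square algebra_simps flip: s(2))
  moreover have "- (k * q) / (2 * k) = - q / 2"
    using k by simp
  ultimately have density: "binormal_density \<sigma> c (\<sigma> * s * u, 0 * u + \<sigma> * s * v)
      = exp (- q / 2) / (2 * pi * \<sigma>\<^sup>2 * s)"
    using binormal_density_scaled[OF assms(1,2), of "s * u" "s * v"]
    unfolding k_def[symmetric] by (simp only: s(3) mult.assoc mult_zero_left add_0)
  have "pos_part (\<sigma> * s * u) * pos_part (\<sigma> * s * v) = (\<sigma> * s)\<^sup>2 * (pos_part u * pos_part v)"
    using assms(1) s(1) by (simp add: pos_part_mult_pos power2_eq_square)
  also have "(\<sigma> * s)\<^sup>2 = \<sigma>\<^sup>2 * k"
    by (simp add: power_mult_distrib s(2))
  finally have pos_parts: "(pos_part (\<sigma> * s * u) * pos_part (\<sigma> * s * v)) powr r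
      = (\<sigma>\<^sup>2 * k) powr r * (pos_part u * pos_part v) powr r"
    using k by (simp add: powr_mult)
  show ?thesis
    unfolding density unfolding mult_zero_left add_0 pos_parts k_def[symmetric]
    using assms(1) s(1) by (simp add: pos_moment_kernel_def q_def power2_eq_square field_simps)
qed

lemma integral_pos_part_powr_binormal:
  fixes X Y :: "'a \<Rightarrow> real"
  assumes "0 < \<sigma>" "c \<in> {-1<..<1}"
    and distr: "distributed M lborel (\<lambda>\<omega>. (X \<omega>, Y \<omega>)) (\<lambda>p. ennreal (binormal_density \<sigma> c p))"
  shows "(\<integral>\<omega>. (pos_part (X \<omega>) * pos_part (Y \<omega>)) powr r \<partial>M)
    = (\<sigma>\<^sup>2 * (1 - c\<^sup>2)) powr r * sqrt (1 - c\<^sup>2) / (2 * pi) * (\<integral>p. pos_moment_kernel r c p \<partial>lborel)"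
proof -
  have "0 < 1 - c\<^sup>2"
    using assms by (simp add: abs_square_less_1 abs_less_iff)
  then show ?thesis
    using assms binormal_density_mult_pos_part_powr_scaled[OF assms(1,2)]
    by (intro integral_distributed_pair_shear[OF distr,
          where G = "\<lambda>x y. (pos_part x * pos_part y) powr r"
            and a = "\<sigma> * sqrt (1 - c\<^sup>2)" and b = 0 and d = "\<sigma> * sqrt (1 - c\<^sup>2)"]) auto
qed

lemma tendsto_pos_part_powr_moment_ratio:
  fixes X Y :: "real \<Rightarrow> 'a \<Rightarrow> real"
  assumes "0 < \<sigma>" "0 \<le> r"
    and gauss: "\<And>c. c \<in> {-1<..<1} \<Longrightarrow> distributed (M c) lborel (\<lambda>\<omega>. (X c \<omega>, Y c \<omega>))
      (\<lambda>p. ennreal (binormal_density \<sigma> c p))"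
  shows "((\<lambda>c. (\<integral>\<omega>. (pos_part (X c \<omega>) * pos_part (Y c \<omega>)) powr r \<partial>(M c))
      / (K_const r * \<sigma> powr (- 2 * (1 + r))
         * (\<sigma>\<^sup>2 * \<sigma>\<^sup>2 - (c * \<sigma>\<^sup>2) * (c * \<sigma>\<^sup>2)) powr ((2 * r + 1) / 2))) \<longlongrightarrow> 1) (at_right (-1))"
proof -
  let ?J = "\<lambda>c. \<integral>p. pos_moment_kernel r c p \<partial>lborel"
  have J: "0 < ?J (-1)"
    using integral_pos_moment_kernel_pos[OF assms(2)] .
  have "((\<lambda>c. ?J c / ?J (-1)) \<longlongrightarrow> ?J (-1) / ?J (-1)) (at_right (-1))"
    using J by (intro tendsto_divide tendsto_integral_pos_moment_kernel assms(2) tendsto_const) simp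
  moreover have "\<forall>\<^sub>F c in at_right (-1 :: real). c \<in> {-1<..<1}"
    by (rule eventually_at_right_real) simp
  then have "\<forall>\<^sub>F c in at_right (-1). ?J c / ?J (-1)
      = (\<integral>\<omega>. (pos_part (X c \<omega>) * pos_part (Y c \<omega>)) powr r \<partial>(M c))
        / (K_const r * \<sigma> powr (- 2 * (1 + r)) * (\<sigma>\<^sup>2 * \<sigma>\<^sup>2 - (c * \<sigma>\<^sup>2) * (c * \<sigma>\<^sup>2)) powr ((2 * r + 1) / 2))"
  proof eventually_elim
    case (elim c)
    then have c: "0 < 1 - c\<^sup>2"
      by (simp add: abs_square_less_1 abs_less_iff)
    then have "0 < (\<sigma>\<^sup>2 * (1 - c\<^sup>2)) powr r * sqrt (1 - c\<^sup>2)"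
      using assms(1) by simp
    moreover have denom: "K_const r * \<sigma> powr (- 2 * (1 + r))
        * (\<sigma>\<^sup>2 * \<sigma>\<^sup>2 - (c * \<sigma>\<^sup>2) * (c * \<sigma>\<^sup>2)) powr ((2 * r + 1) / 2)
        = K_const r * ((\<sigma>\<^sup>2 * (1 - c\<^sup>2)) powr r * sqrt (1 - c\<^sup>2))"
      by (simp only: mult.assoc[of "K_const r"] binormal_det_powr[OF assms(1) elim])
    ultimately show ?case
      using J c assms(1) unfolding integral_pos_part_powr_binormal[OF assms(1) elim gauss[OF elim]]
        denom K_const_eq_integral_pos_moment_kernel
      by (simp add: field_simps)
  qed
  ultimately show ?thesis
    using J by (simp add: tendsto_cong)
qed

definition pos_neg_kernel :: "real \<Rightarrow> real \<times> real \<Rightarrow> real" where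
  "pos_neg_kernel c p = pos_part (fst p) * neg_part (c * fst p + sqrt (1 - c\<^sup>2) * snd p)
     * exp (- ((fst p)\<^sup>2 + (snd p)\<^sup>2) / 2)"

lemma borel_measurable_pos_neg_kernel [measurable]: "pos_neg_kernel c \<in> borel_measurable borel"
  unfolding pos_neg_kernel_def by measurable

lemma pos_neg_kernel_nonneg [simp]: "0 \<le> pos_neg_kernel c p"
  by (simp add: pos_neg_kernel_def)

lemma pos_neg_kernel_le:
  assumes "\<bar>c\<bar> \<le> 1"
  shows "pos_neg_kernel c p
    \<le> (\<bar>fst p\<bar> ^ 2 * exp (- (fst p)\<^sup>2 / 2)) * (\<bar>snd p\<bar> ^ 0 * exp (- (snd p)\<^sup>2 / 2))
      + (\<bar>fst p\<bar> ^ 1 * exp (- (fst p)\<^sup>2 / 2)) * (\<bar>snd p\<bar> ^ 1 * exp (- (snd p)\<^sup>2 / 2))"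
proof -
  obtain u w where p: "p = (u, w)"
    by (cases p)
  have s: "0 \<le> sqrt (1 - c\<^sup>2)" "sqrt (1 - c\<^sup>2) \<le> 1"
    using assms by (simp_all add: abs_square_le_1)
  have "neg_part (c * u + sqrt (1 - c\<^sup>2) * w) \<le> \<bar>c\<bar> * \<bar>u\<bar> + sqrt (1 - c\<^sup>2) * \<bar>w\<bar>"
    using s abs_triangle_ineq[of "c * u" "sqrt (1 - c\<^sup>2) * w"] by (simp add: neg_part_def abs_mult)
  also have "\<dots> \<le> \<bar>u\<bar> + \<bar>w\<bar>"
    using assms s by (intro add_mono mult_left_le_one_le) auto
  moreover have "exp (- (u\<^sup>2 + w\<^sup>2) / 2) = exp (- u\<^sup>2 / 2) * exp (- w\<^sup>2 / 2)"
    by (simp add: add_divide_distrib flip: exp_add)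
  ultimately have "pos_neg_kernel c p \<le> \<bar>u\<bar> * (\<bar>u\<bar> + \<bar>w\<bar>) * (exp (- u\<^sup>2 / 2) * exp (- w\<^sup>2 / 2))"
    unfolding pos_neg_kernel_def p by (intro mult_right_mono mult_mono) (auto simp: pos_part_def)
  then show ?thesis
    by (simp add: p algebra_simps power2_eq_square)
qed

lemma tendsto_integral_pos_neg_kernel:
  "((\<lambda>c. \<integral>p. pos_neg_kernel c p \<partial>lborel) \<longlongrightarrow> (\<integral>p. pos_neg_kernel (-1) p \<partial>lborel)) (at_right (-1))"
proof (rule integral_dominated_convergence_at_right[where b = 0])
  let ?g = "\<lambda>k u::real. \<bar>u\<bar> ^ k * exp (- u\<^sup>2 / 2)"
  show "integrable lborel (\<lambda>p. ?g 2 (fst p) * ?g 0 (snd p) + ?g 1 (fst p) * ?g 1 (snd p))"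
    by (intro Bochner_Integration.integrable_add integrable_lborel_pair_mult integrable_abs_power_gauss)
  show "\<bar>pos_neg_kernel c p\<bar> \<le> ?g 2 (fst p) * ?g 0 (snd p) + ?g 1 (fst p) * ?g 1 (snd p)"
    if "c \<in> {-1<..<0}" for c p
    using pos_neg_kernel_le[of c p] that by simp
  show "((\<lambda>c. pos_neg_kernel c p) \<longlongrightarrow> pos_neg_kernel (-1) p) (at_right (-1))" for p
    unfolding pos_neg_kernel_def neg_part_def by (intro tendsto_intros) auto
qed (simp_all add: measurable_lborel1)

lemma integral_pos_neg_kernel_minus_one: "(\<integral>p. pos_neg_kernel (-1) p \<partial>lborel) = pi"
proof -
  have "pos_neg_kernel (-1) = (\<lambda>p. ((pos_part (fst p))\<^sup>2 * exp (- (fst p)\<^sup>2 / 2)) * exp (- (snd p)\<^sup>2 / 2))"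
    by (simp add: fun_eq_iff pos_neg_kernel_def neg_part_uminus power2_eq_square field_simps flip: exp_add)
  moreover have "(\<integral>p. ((pos_part (fst p))\<^sup>2 * exp (- (fst p)\<^sup>2 / 2)) * exp (- (snd p)\<^sup>2 / 2) \<partial>lborel)
      = (\<integral>u. (pos_part u)\<^sup>2 * exp (- u\<^sup>2 / 2) \<partial>lborel) * (\<integral>w. exp (- w\<^sup>2 / 2) \<partial>lborel)"
  proof (rule integral_lborel_pair_mult)
    show "integrable lborel (\<lambda>u::real. (pos_part u)\<^sup>2 * exp (- u\<^sup>2 / 2))"
      using integrable_pos_part_powr_gauss[of 2] by (simp add: powr_realpow' pos_part_def)
    show "integrable lborel (\<lambda>u::real. exp (- u\<^sup>2 / 2))"
      using integrable_abs_power_gauss[of 0] by simp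
  qed simp_all
  ultimately show ?thesis
    unfolding integral_pos_part_sq_gauss integral_gauss by simp
qed

lemma binormal_density_mult_pos_neg_part_sheared:
  assumes "0 < \<sigma>" "c \<in> {-1<..<1}"
  defines "s \<equiv> sqrt (1 - c\<^sup>2)"
  shows "\<bar>\<sigma>\<bar> * \<bar>\<sigma> * s\<bar> * (binormal_density \<sigma> c (\<sigma> * u, \<sigma> * c * u + \<sigma> * s * w)
      * (pos_part (\<sigma> * u) * neg_part (\<sigma> * c * u + \<sigma> * s * w)))
    = \<sigma>\<^sup>2 / (2 * pi) * pos_neg_kernel c (u, w)"
proof -
  define k where "k = 1 - c\<^sup>2"
  define z where "z = c * u + s * w"
  have k: "0 < k"
    using assms by (simp add: k_def abs_square_less_1 abs_less_iff)
  have s: "0 < s" "s\<^sup>2 = k" "sqrt k = s"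
    using k by (simp_all add: s_def k_def)
  have "u\<^sup>2 - 2 * c * u * z + z\<^sup>2 = (1 - c\<^sup>2) * u\<^sup>2 + s\<^sup>2 * w\<^sup>2"
    by (simp add: z_def power2_eq_square algebra_simps)
  also have "\<dots> = k * (u\<^sup>2 + w\<^sup>2)"
    by (simp add: s(2) k_def algebra_simps)
  finally have "u\<^sup>2 - 2 * c * u * z + z\<^sup>2 = k * (u\<^sup>2 + w\<^sup>2)" .
  moreover have "- (k * n) / (2 * k) = - n / 2" for n
    using k by simp
  ultimately have density: "binormal_density \<sigma> c (\<sigma> * u, \<sigma> * z) = exp (- (u\<^sup>2 + w\<^sup>2) / 2) / (2 * pi * \<sigma>\<^sup>2 * s)"
    using binormal_density_scaled[OF assms(1,2), of u z] unfolding k_def[symmetric] by (simp only: s(3))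
  have "\<sigma> * c * u + \<sigma> * s * w = \<sigma> * z"
    by (simp add: z_def algebra_simps)
  then show ?thesis
    unfolding pos_neg_kernel_def fst_conv snd_conv s_def[symmetric] z_def[symmetric]
    using assms(1) s(1)
    by (simp add: density pos_part_mult_pos neg_part_mult_pos power2_eq_square field_simps)
qed

lemma integral_pos_neg_part_binormal:
  fixes X Y :: "'a \<Rightarrow> real"
  assumes "0 < \<sigma>" "c \<in> {-1<..<1}"
    and distr: "distributed M lborel (\<lambda>\<omega>. (X \<omega>, Y \<omega>)) (\<lambda>p. ennreal (binormal_density \<sigma> c p))"
  shows "(\<integral>\<omega>. pos_part (X \<omega>) * neg_part (Y \<omega>) \<partial>M) = \<sigma>\<^sup>2 / (2 * pi) * (\<integral>p. pos_neg_kernel c p \<partial>lborel)"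
proof -
  have "0 < 1 - c\<^sup>2"
    using assms by (simp add: abs_square_less_1 abs_less_iff)
  then show ?thesis
    using assms binormal_density_mult_pos_neg_part_sheared[OF assms(1,2)]
    by (intro integral_distributed_pair_shear[OF distr, where G = "\<lambda>x y. pos_part x * neg_part y"
          and a = \<sigma> and b = "\<sigma> * c" and d = "\<sigma> * sqrt (1 - c\<^sup>2)"]) auto
qed

lemma tendsto_pos_neg_moment_ratio:
  fixes X Y :: "real \<Rightarrow> 'a \<Rightarrow> real"
  assumes "0 < \<sigma>"
    and gauss: "\<And>c. c \<in> {-1<..<1} \<Longrightarrow> distributed (M c) lborel (\<lambda>\<omega>. (X c \<omega>, Y c \<omega>))
      (\<lambda>p. ennreal (binormal_density \<sigma> c p))"
  shows "((\<lambda>c. (\<integral>\<omega>. pos_part (X c \<omega>) * neg_part (Y c \<omega>) \<partial>(M c)) / (\<sigma>\<^sup>2 / 2)) \<longlongrightarrow> 1) (at_right (-1))"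
proof -
  let ?L = "\<lambda>c. \<integral>p. pos_neg_kernel c p \<partial>lborel"
  have "((\<lambda>c. ?L c / pi) \<longlongrightarrow> pi / pi) (at_right (-1))"
    using tendsto_integral_pos_neg_kernel unfolding integral_pos_neg_kernel_minus_one
    by (intro tendsto_divide tendsto_const) auto
  moreover have "\<forall>\<^sub>F c in at_right (-1 :: real). c \<in> {-1<..<1}"
    by (rule eventually_at_right_real) simp
  then have "\<forall>\<^sub>F c in at_right (-1).
      ?L c / pi = (\<integral>\<omega>. pos_part (X c \<omega>) * neg_part (Y c \<omega>) \<partial>(M c)) / (\<sigma>\<^sup>2 / 2)"
    by eventually_elim (use assms(1) in \<open>simp add: integral_pos_neg_part_binormal[OF assms(1) _ gauss]\<close>)
  ultimately show ?thesis
    by (simp add: tendsto_cong)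
qed

theorem lemma6:
  fixes \<sigma> r :: real
    and M :: "real \<Rightarrow> 'a measure"
    and X Y :: "real \<Rightarrow> 'a \<Rightarrow> real"
  assumes \<sigma>_pos: "\<sigma> > 0"
    and r_pos: "r > 0"
    and prob: "\<And>c. c \<in> {-1<..<1} \<Longrightarrow> prob_space (M c)"
    and gauss: "\<And>c. c \<in> {-1<..<1} \<Longrightarrow>
        distributed (M c) (lborel :: (real \<times> real) measure) (\<lambda>\<omega>. (X c \<omega>, Y c \<omega>))
          (\<lambda>p. ennreal (binormal_density \<sigma> c p))"
  shows "set_integrable (lborel :: (real \<times> real) measure) ({0<..} \<times> {0<..})
           (\<lambda>p. (fst p) powr r * (snd p) powr r * exp (- ((fst p + snd p)^2) / 2))
       \<and> ((\<lambda>c. (\<integral>\<omega>. (pos_part (X c \<omega>) * pos_part (Y c \<omega>)) powr r \<partial>(M c))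
              / (K_const r * \<sigma> powr (- 2 * (1 + r))
                 * (\<sigma>^2 * \<sigma>^2 - (c * \<sigma>^2) * (c * \<sigma>^2)) powr ((2 * r + 1) / 2)))
           \<longlongrightarrow> 1) (at_right (-1))
       \<and> K_const 1 = 1 / (6 * pi)
       \<and> ((\<lambda>c. (\<integral>\<omega>. pos_part (X c \<omega>) * neg_part (Y c \<omega>) \<partial>(M c)) / (\<sigma>^2 / 2))
           \<longlongrightarrow> 1) (at_right (-1))"
  using set_integrable_K_integrand tendsto_pos_part_powr_moment_ratio[OF \<sigma>_pos _ gauss]
    K_const_one tendsto_pos_neg_moment_ratio[OF \<sigma>_pos gauss] r_pos
  by simp

end
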